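(* Let $K$ be the correlation kernel described in the context. Let $t,t'$ be integers with $u_0<t<t+1<u_N$ and $u_0<t'<u_N$, let $j,j'\in\mathbb Z+\frac12$, and put $m=t+\frac12$. If $m\in D^+$, then $$ K((t+1,j),(t',j'))-K((t,j),(t',j'))+x^+_m\,K((t,j-1),(t',j'))=\delta_{t+1,t'}\,\delta_{j,j'} . $$ If $m\in D^-$, then $$ K((t+1,j),(t',j'))-K((t,j),(t',j'))+x^-_m\,K((t,j+1),(t',j'))=\delta_{t+1,t'}\,\delta_{j,j'} . $$
   Context: Fix an integer $N\ge1$ and integers $u_0<v_1<u_1<\dots<u_{N-1}<v_N<u_N$. For each integer $t$ with $u_0<t<u_N$ fix $q_t\in(0,1)$. For a half-integer $m\in(u_0,u_N)$ write $m\in D^+$ if $v_i<m<u_i$ for some $i$, and $m\in D^-$ if $u_{i-1}<m<v_i$ for some $i$. Put $x^+_m=\prod_{t\in\mathbb Z,\,u_0<t<m}q_t$ and $x^-_m=(x^+_m)^{-1}$. Define $$ \Phi_+(z,t)=\prod_{m\in D^+,\,m>t}(1-zx^+_m),\qquad \Phi_-(z,t)=\prod_{m\in D^-,\,m<t}(1-x^-_m/z), $$ $$ R(t)=\min_{m\in D^+,m>t}1/x^+_m\ (+\infty\text{ if empty}),\qquad R^*(t)=\max_{m\in D^-,m<t}x^-_m\ (0\text{ if empty}). $$ For integers $t_1,t_2\in(u_0,u_N)$ and $j_1,j_2\in\mathbb Z+\frac12$, $$ K((t_1,j_1),(t_2,j_2))=\frac{1}{(2\pi i)^2}\oint_{|z|=\rho_1}\oint_{|w|=\rho_2}\frac{\Phi_-(z,t_1)\Phi_+(w,t_2)}{\Phi_+(z,t_1)\Phi_-(w,t_2)}\frac{z^{-j_1-\frac12}w^{j_2-\frac12}}{z-w}\,dz\,dw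 . $$ The circles are positively oriented, with $\rho_1<R(t_1)$ and $\rho_2>R^*(t_2)$; moreover $\rho_2<\rho_1$ if $t_1\ge t_2$, and $\rho_1<\rho_2$ if $t_1<t_2$. This $K$ is the correlation kernel of the random sequence of interlacing partitions (diagonal slices of a random skew plane partition) with weight $\prod q_t^{|\lambda(t)|}$. *)

theory Defs
  imports "HOL-Complex_Analysis.Complex_Analysis"
begin

text \<open>Half-integers are represented as real numbers m with m - 1/2 an integer.
  The data: u :: nat => int gives u_0,...,u_N, v :: nat => int gives v_1,...,v_N,
  q :: int => real gives the weights q_t.\<close>

definition halfint :: "real set" where
  "halfint = {m. m - 1/2 \<in> \<int>}"

definition Dplus :: "nat \<Rightarrow> (nat \<Rightarrow> int) \<Rightarrow> (nat \<Rightarrow> int) \<Rightarrow> real set" where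
  "Dplus N u v = {m \<in> halfint. real_of_int (u 0) < m \<and> m < real_of_int (u N) \<and>
      (\<exists>i\<in>{1..N}. real_of_int (v i) < m \<and> m < real_of_int (u i))}"

definition Dminus :: "nat \<Rightarrow> (nat \<Rightarrow> int) \<Rightarrow> (nat \<Rightarrow> int) \<Rightarrow> real set" where
  "Dminus N u v = {m \<in> halfint. real_of_int (u 0) < m \<and> m < real_of_int (u N) \<and>
      (\<exists>i\<in>{1..N}. real_of_int (u (i - 1)) < m \<and> m < real_of_int (v i))}"

definition xplus :: "(nat \<Rightarrow> int) \<Rightarrow> (int \<Rightarrow> real) \<Rightarrow> real \<Rightarrow> real" where
  "xplus u q m = (\<Prod>s\<in>{s::int. u 0 < s \<and> real_of_int s < m}. q s)"

definition xminus :: "(nat \<Rightarrow> int) \<Rightarrow> (int \<Rightarrow> real) \<Rightarrow> real \<Rightarrow> real" where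
  "xminus u q m = inverse (xplus u q m)"

definition PhiPlus :: "nat \<Rightarrow> (nat \<Rightarrow> int) \<Rightarrow> (nat \<Rightarrow> int) \<Rightarrow> (int \<Rightarrow> real) \<Rightarrow> complex \<Rightarrow> int \<Rightarrow> complex" where
  "PhiPlus N u v q z t =
     (\<Prod>m\<in>{m \<in> Dplus N u v. real_of_int t < m}. 1 - z * complex_of_real (xplus u q m))"

definition PhiMinus :: "nat \<Rightarrow> (nat \<Rightarrow> int) \<Rightarrow> (nat \<Rightarrow> int) \<Rightarrow> (int \<Rightarrow> real) \<Rightarrow> complex \<Rightarrow> int \<Rightarrow> complex" where
  "PhiMinus N u v q z t =
     (\<Prod>m\<in>{m \<in> Dminus N u v. m < real_of_int t}. 1 - complex_of_real (xminus u q m) / z)"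

definition admissible_radii ::
  "nat \<Rightarrow> (nat \<Rightarrow> int) \<Rightarrow> (nat \<Rightarrow> int) \<Rightarrow> (int \<Rightarrow> real) \<Rightarrow> int \<Rightarrow> int \<Rightarrow> real \<Rightarrow> real \<Rightarrow> bool" where
  "admissible_radii N u v q t1 t2 \<rho>1 \<rho>2 \<longleftrightarrow>
     0 < \<rho>1 \<and> 0 < \<rho>2 \<and>
     (\<forall>m\<in>Dplus N u v. real_of_int t1 < m \<longrightarrow> \<rho>1 < 1 / xplus u q m) \<and>
     (\<forall>m\<in>Dminus N u v. m < real_of_int t2 \<longrightarrow> xminus u q m < \<rho>2) \<and>
     (t1 \<ge> t2 \<longrightarrow> \<rho>2 < \<rho>1) \<and> (t1 < t2 \<longrightarrow> \<rho>1 < \<rho>2)"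

text \<open>The double contour integral for given radii. Exponents -j1-1/2 and j2-1/2 are
  integers for half-integer j1, j2; they are extracted with floor.\<close>
definition Kint ::
  "nat \<Rightarrow> (nat \<Rightarrow> int) \<Rightarrow> (nat \<Rightarrow> int) \<Rightarrow> (int \<Rightarrow> real) \<Rightarrow> real \<Rightarrow> real \<Rightarrow>
   int \<Rightarrow> real \<Rightarrow> int \<Rightarrow> real \<Rightarrow> complex" where
  "Kint N u v q \<rho>1 \<rho>2 t1 j1 t2 j2 =
     contour_integral (circlepath 0 \<rho>1) (\<lambda>z.
       contour_integral (circlepath 0 \<rho>2) (\<lambda>w.
         (PhiMinus N u v q z t1 * PhiPlus N u v q w t2) /
         (PhiPlus N u v q z t1 * PhiMinus N u v q w t2) *
         (z powi \<lfloor>- j1 - 1/2\<rfloor> * w powi \<lfloor>j2 - 1/2\<rfloor>) / (z - w)))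
     / (2 * pi * \<i>)^2"

definition K ::
  "nat \<Rightarrow> (nat \<Rightarrow> int) \<Rightarrow> (nat \<Rightarrow> int) \<Rightarrow> (int \<Rightarrow> real) \<Rightarrow> int \<Rightarrow> real \<Rightarrow> int \<Rightarrow> real \<Rightarrow> complex" where
  "K N u v q t1 j1 t2 j2 =
     (let \<rho> = (SOME \<rho>. admissible_radii N u v q t1 t2 (fst \<rho>) (snd \<rho>))
      in Kint N u v q (fst \<rho>) (snd \<rho>) t1 j1 t2 j2)"

end

theory Submission
  imports Defs
begin

text \<open>
  If m = t + 1/2 lies in D+, then Phi_+(z,t) = (1 - z x+_m) Phi_+(z,t+1) and Phi_-(z,t) = Phi_-(z,t+1),
  so the z-integrand of K((t,j),.) - x+_m K((t,j-1),.) is exactly the z-integrand of K((t+1,j),.);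
  for m in D- the same happens with Phi_- and j+1. The left-hand side is therefore one double contour
  integral taken over two pairs of circles, admissible for (t,t') and for (t+1,t') respectively.
  By Cauchy's theorem the integral only depends on which of the two circles is the inner one, and
  this changes only when t' = t+1. Then moving the z-circle across the w-circle picks up the residue
  of 1/(z - w) at z = w, the integral of z^(-j-1/2) z^(j'-1/2) dz/(2 pi i), which is delta(j,j').
\<close>

section \<open>Integrals over circles centred at the origin\<close>

lemma contour_integral_circlepath_eq_annulus:
  fixes f :: "complex \<Rightarrow> complex"
  assumes "open S" "f holomorphic_on S" "0 < r1" "0 < r2"
    and annulus: "\<And>z. min r1 r2 \<le> norm z \<Longrightarrow> norm z \<le> max r1 r2 \<Longrightarrow> z \<in> S"
  shows "contour_integral (circlepath 0 r1) f = contour_integral (circlepath 0 r2) f"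
proof (rule Cauchy_theorem_homotopic_loops[OF _ assms(1,2)])
  show "homotopic_loops S (circlepath 0 r1) (circlepath 0 r2)"
  proof (rule homotopic_loops_linear)
    fix s :: real
    define e where "e = exp (2 * of_real pi * \<i> * of_real s)"
    have "norm e = 1" by (simp add: e_def norm_exp_eq_Re)
    have "linear (\<lambda>\<rho>. of_real \<rho> * e)"
      by (intro linearI) (auto simp: algebra_simps scaleR_conv_of_real)
    then have "closed_segment (circlepath 0 r1 s) (circlepath 0 r2 s) =
        (\<lambda>\<rho>. of_real \<rho> * e) ` closed_segment r1 r2"
      using closed_segment_linear_image[of "\<lambda>\<rho>. of_real \<rho> * e" r1 r2] by (simp add: circlepath e_def)
    also have "\<dots> \<subseteq> S"
      using assms \<open>norm e = 1\<close>
      by (auto simp: closed_segment_eq_real_ivl norm_mult intro!: annulus split: if_splits)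
    finally show "closed_segment (circlepath 0 r1 s) (circlepath 0 r2 s) \<subseteq> S" .
  qed auto
qed auto

lemma contour_integral_lmul_unconditional:
  "contour_integral g (\<lambda>x. c * f x) = c * contour_integral g f"
proof (cases "c = 0 \<or> f contour_integrable_on g")
  case True
  then show ?thesis by (auto intro: contour_integral_lmul)
next
  case False
  then have "\<not> (\<lambda>x. c * f x) contour_integrable_on g"
    using contour_integrable_lmul[of "\<lambda>x. c * f x" g "inverse c"]
    by (auto simp: mult.assoc[symmetric])
  then show ?thesis using False by (simp add: not_integrable_contour_integral)
qed

lemma contour_integral_circlepath_power_int:
  assumes "0 < r"
  shows "contour_integral (circlepath 0 r) (\<lambda>z. z powi n) = (if n = -1 then 2 * of_real pi * \<i> else 0)"
proof -
  have "((\<lambda>z. 1 * z powi (-((-n-1)+1))) has_contour_integral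
            complex_of_real (2 * pi) * \<i> * fls_nth (fls_const 1) (-n-1)) (circlepath 0 r)"
    by (rule fls_nth_as_contour_integral[where r="r+1"]) (use assms in \<open>auto intro!: holomorphic_intros\<close>)
  then show ?thesis by (auto dest!: contour_integral_unique)
qed

definition cauchy_circle_integral :: "(complex \<Rightarrow> complex) \<Rightarrow> real \<Rightarrow> complex \<Rightarrow> complex" where
  "cauchy_circle_integral B r z = contour_integral (circlepath 0 r) (\<lambda>w. B w / (w - z))"

lemma cauchy_circle_integral_holomorphic:
  assumes "continuous_on (sphere 0 r) B" "0 < r"
  shows "cauchy_circle_integral B r holomorphic_on (- sphere 0 r)"
proof -
  have image: "path_image (circlepath 0 r) = sphere 0 r"
    using assms by (simp add: path_image_circlepath_nonneg)
  have integral: "((\<lambda>w. B w / (w - z)) has_contour_integral cauchy_circle_integral B r z) (circlepath 0 r)"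
    if "z \<notin> sphere 0 r" for z
    unfolding cauchy_circle_integral_def
    using that assms image by (intro has_contour_integral_integral contour_integrable_continuous_circlepath)
      (auto intro!: continuous_intros)
  have "\<exists>f'. (cauchy_circle_integral B r has_field_derivative f') (at z)" if "z \<in> - sphere 0 r" for z
    using Cauchy_next_derivative(2)[where B="2*pi*r" and S=UNIV and k=1 and w=z and f'=B
        and \<gamma>="circlepath 0 r" and f="cauchy_circle_integral B r"]
      that assms image integral
    by (auto simp: vector_derivative_circlepath norm_mult)
  then show ?thesis by (simp add: holomorphic_on_open open_Compl)
qed

lemma cauchy_circle_integral_radius_eq:
  assumes "open S" "B holomorphic_on S" "0 < r" "0 < r'"
    and annulus: "\<And>w. min r r' \<le> norm w \<Longrightarrow> norm w \<le> max r r' \<Longrightarrow> w \<in> S"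
    and z: "norm z < min r r' \<or> max r r' < norm z"
  shows "cauchy_circle_integral B r z = cauchy_circle_integral B r' z"
  unfolding cauchy_circle_integral_def
proof (rule contour_integral_circlepath_eq_annulus[where S="S - {z}"])
  show "(\<lambda>w. B w / (w - z)) holomorphic_on S - {z}"
    using assms(2) by (auto intro!: holomorphic_intros elim: holomorphic_on_subset)
qed (use assms in \<open>auto simp: open_Diff\<close>)

lemma cauchy_circle_integral_jump:
  assumes "open S" "B holomorphic_on S" "0 < r" "r < norm z" "norm z < r'"
    and annulus: "\<And>w. r \<le> norm w \<Longrightarrow> norm w \<le> r' \<Longrightarrow> w \<in> S"
  shows "cauchy_circle_integral B r' z - cauchy_circle_integral B r z = 2 * of_real pi * \<i> * B z"
proof -
  \<comment> \<open>B w / (w - z) = g w + B z / (w - z) with g holomorphic on S: only the pole term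
    distinguishes the two circles.\<close>
  define g where "g = (\<lambda>w. if w = z then deriv B z else (B w - B z) / (w - z))"
  have "z \<in> S" using annulus assms by auto
  then have g: "g holomorphic_on S"
    unfolding g_def using assms(1,2) by (intro pole_lemma) (auto simp: interior_open)
  have circles: "path_image (circlepath 0 \<rho>) \<subseteq> S" if "\<rho> \<in> {r, r'}" for \<rho>
    using that assms annulus by (auto simp: path_image_circlepath_nonneg)
  have g_integral: "(g has_contour_integral contour_integral (circlepath 0 \<rho>) g) (circlepath 0 \<rho>)"
    if "\<rho> \<in> {r, r'}" for \<rho>
    using circles[OF that]
    by (intro has_contour_integral_integral contour_integrable_holomorphic_simple[OF g assms(1)]) auto
  have decompose:
    "((\<lambda>w. B w / (w - z)) has_contour_integral contour_integral (circlepath 0 \<rho>) g + I) (circlepath 0 \<rho>)"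
    if "\<rho> \<in> {r, r'}" "((\<lambda>w. B z / (w - z)) has_contour_integral I) (circlepath 0 \<rho>)" for \<rho> I
  proof (rule has_contour_integral_eq[OF has_contour_integral_add[OF g_integral[OF that(1)] that(2)]])
    fix w assume "w \<in> path_image (circlepath 0 \<rho>)"
    then have "w \<noteq> z" using that(1) assms by (auto simp: path_image_circlepath_nonneg)
    then show "g w + B z / (w - z) = B w / (w - z)" by (simp add: g_def diff_divide_distrib)
  qed
  have "((\<lambda>w. B w / (w - z)) has_contour_integral contour_integral (circlepath 0 r) g + 0) (circlepath 0 r)"
    using assms by (intro decompose Cauchy_theorem_convex_simple[where S="ball 0 (norm z)"])
      (auto intro!: holomorphic_intros simp: path_image_circlepath_nonneg)
  moreover have "((\<lambda>w. B w / (w - z)) has_contour_integral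
      contour_integral (circlepath 0 r') g + 2 * of_real pi * \<i> * B z) (circlepath 0 r')"
    using Cauchy_integral_circlepath_simple[of "\<lambda>_. B z" 0 r' z] assms by (intro decompose) auto
  moreover have "contour_integral (circlepath 0 r) g = contour_integral (circlepath 0 r') g"
    using assms by (intro contour_integral_circlepath_eq_annulus[OF assms(1) g]) (auto intro: annulus)
  ultimately show ?thesis
    unfolding cauchy_circle_integral_def by (auto dest!: contour_integral_unique)
qed

definition double_circle_integral ::
  "(complex \<Rightarrow> complex) \<Rightarrow> (complex \<Rightarrow> complex) \<Rightarrow> real \<Rightarrow> real \<Rightarrow> complex" where
  "double_circle_integral A B r1 r2 =
     contour_integral (circlepath 0 r1) (\<lambda>z. A z * cauchy_circle_integral B r2 z)"

lemma holomorphic_double_circle_integrand: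
  assumes "A holomorphic_on S" "continuous_on (sphere 0 r2) B" "0 < r2"
  shows "(\<lambda>z. A z * cauchy_circle_integral B r2 z) holomorphic_on S - sphere 0 r2"
  using cauchy_circle_integral_holomorphic[OF assms(2,3)] assms(1)
  by (auto intro!: holomorphic_intros elim: holomorphic_on_subset)

lemma contour_integrable_double_circle_integrand:
  assumes "open S" "A holomorphic_on S" "continuous_on (sphere 0 r2) B"
    and "0 < r1" "0 < r2" "r1 \<noteq> r2" "sphere 0 r1 \<subseteq> S"
  shows "(\<lambda>z. A z * cauchy_circle_integral B r2 z) contour_integrable_on circlepath 0 r1"
  using assms
  by (intro contour_integrable_holomorphic_simple[OF holomorphic_double_circle_integrand[OF assms(2,3,5)]])
    (auto simp: path_image_circlepath_nonneg open_Diff)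

lemma double_circle_integral_change_r2:
  assumes "open S" "B holomorphic_on S" "0 < r1" "0 < r2" "0 < r2'"
    and annulus: "\<And>w. min r2 r2' \<le> norm w \<Longrightarrow> norm w \<le> max r2 r2' \<Longrightarrow> w \<in> S"
    and "r1 < min r2 r2' \<or> max r2 r2' < r1"
  shows "double_circle_integral A B r1 r2 = double_circle_integral A B r1 r2'"
  unfolding double_circle_integral_def
  using assms cauchy_circle_integral_radius_eq[OF assms(1,2,4,5) annulus]
  by (intro contour_integral_eq) (auto simp: path_image_circlepath_nonneg)

lemma double_circle_integral_change_r1:
  assumes "open S" "A holomorphic_on S" "continuous_on (sphere 0 r2) B"
    and "0 < r1" "0 < r1'" "0 < r2"
    and annulus: "\<And>z. min r1 r1' \<le> norm z \<Longrightarrow> norm z \<le> max r1 r1' \<Longrightarrow> z \<in> S"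
    and "r2 < min r1 r1' \<or> max r1 r1' < r2"
  shows "double_circle_integral A B r1 r2 = double_circle_integral A B r1' r2"
  unfolding double_circle_integral_def
  using assms
  by (intro contour_integral_circlepath_eq_annulus[OF _ holomorphic_double_circle_integrand[OF assms(2,3,6)]])
    (auto simp: open_Diff intro: annulus)

lemma double_circle_integral_jump:
  assumes "open SA" "A holomorphic_on SA" "open SB" "B holomorphic_on SB"
    and "0 < r2" "r2 < r1" "r1 < r2'"
    and annulus: "\<And>w. r2 \<le> norm w \<Longrightarrow> norm w \<le> r2' \<Longrightarrow> w \<in> SB"
    and "sphere 0 r1 \<subseteq> SA"
  shows "double_circle_integral A B r1 r2' - double_circle_integral A B r1 r2 =
           2 * of_real pi * \<i> * contour_integral (circlepath 0 r1) (\<lambda>z. A z * B z)"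
proof -
  have "continuous_on (sphere 0 \<rho>) B" if "\<rho> \<in> {r2, r2'}" for \<rho>
    using that assms by (intro holomorphic_on_imp_continuous_on holomorphic_on_subset[OF assms(4)]) auto
  then have integrable: "(\<lambda>z. A z * cauchy_circle_integral B \<rho> z) contour_integrable_on circlepath 0 r1"
    if "\<rho> \<in> {r2, r2'}" for \<rho>
    using that assms by (intro contour_integrable_double_circle_integrand[OF assms(1,2)]) auto
  have "double_circle_integral A B r1 r2' - double_circle_integral A B r1 r2 =
      contour_integral (circlepath 0 r1)
        (\<lambda>z. A z * cauchy_circle_integral B r2' z - A z * cauchy_circle_integral B r2 z)"
    unfolding double_circle_integral_def using integrable by (simp add: contour_integral_diff)
  also have "\<dots> = contour_integral (circlepath 0 r1) (\<lambda>z. 2 * of_real pi * \<i> * (A z * B z))"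
  proof (rule contour_integral_eq)
    fix z assume "z \<in> path_image (circlepath 0 r1)"
    then have "norm z = r1" using assms by (simp add: path_image_circlepath_nonneg)
    then show "A z * cauchy_circle_integral B r2' z - A z * cauchy_circle_integral B r2 z =
        2 * of_real pi * \<i> * (A z * B z)"
      using cauchy_circle_integral_jump[OF assms(3,4,5), of z r2'] annulus assms
      by (auto simp: right_diff_distrib[symmetric])
  qed
  finally show ?thesis by (simp add: contour_integral_lmul_unconditional)
qed

lemma double_circle_integral_radii_eq:
  assumes hol: "open SA" "A holomorphic_on SA" "open SB" "B holomorphic_on SB"
    and disk: "\<And>z. 0 < norm z \<Longrightarrow> norm z \<le> max r1 r1' \<Longrightarrow> z \<in> SA"
    and outside: "\<And>w. min r2 r2' \<le> norm w \<Longrightarrow> w \<in> SB"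
    and "0 < r1" "0 < r1'" "0 < r2" "0 < r2'"
    and "(r1 < r2 \<and> r1' < r2') \<or> (r2 < r1 \<and> r2' < r1')"
  shows "double_circle_integral A B r1 r2 = double_circle_integral A B r1' r2'"
proof -
  \<comment> \<open>Keeps the w-circle on the same side of both z-circles.\<close>
  define P where "P = (if r1 < r2 then max r2 r2' else min r2 r2')"
  have "continuous_on (sphere 0 P) B"
    using outside
    by (intro holomorphic_on_imp_continuous_on holomorphic_on_subset[OF hol(4)]) (auto simp: P_def)
  have "double_circle_integral A B r1 r2 = double_circle_integral A B r1 P"
    using assms by (intro double_circle_integral_change_r2[OF hol(3,4)]) (auto simp: P_def)
  also have "\<dots> = double_circle_integral A B r1' P"
    using assms \<open>continuous_on (sphere 0 P) B\<close>
    by (intro double_circle_integral_change_r1[OF hol(1,2)]) (auto simp: P_def intro!: disk)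
  also have "\<dots> = double_circle_integral A B r1' r2'"
    using assms by (intro double_circle_integral_change_r2[OF hol(3,4)]) (auto simp: P_def)
  finally show ?thesis .
qed

lemma double_circle_integral_radii_jump:
  assumes hol: "open SA" "A holomorphic_on SA" "open SB" "B holomorphic_on SB"
    and disk: "\<And>z. 0 < norm z \<Longrightarrow> norm z \<le> max r1 r1' \<Longrightarrow> z \<in> SA"
    and outside: "\<And>w. min r2 r2' \<le> norm w \<Longrightarrow> w \<in> SB"
    and "0 < r1" "0 < r2'" "r1 < r2" "r2' < r1'"
  shows "double_circle_integral A B r1' r2' - double_circle_integral A B r1 r2 =
           - (2 * of_real pi * \<i> * contour_integral (circlepath 0 r1') (\<lambda>z. A z * B z))"
proof -
  \<comment> \<open>Move the w-circle outside both z-circles, where the z-radius may be changed freely.\<close>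
  define P where "P = max r2 (r1' + 1)"
  have "continuous_on (sphere 0 P) B"
    using outside
    by (intro holomorphic_on_imp_continuous_on holomorphic_on_subset[OF hol(4)]) (auto simp: P_def)
  have "double_circle_integral A B r1 r2 = double_circle_integral A B r1 P"
    using assms by (intro double_circle_integral_change_r2[OF hol(3,4)]) (auto simp: P_def)
  also have "\<dots> = double_circle_integral A B r1' P"
    using assms \<open>continuous_on (sphere 0 P) B\<close>
    by (intro double_circle_integral_change_r1[OF hol(1,2)]) (auto simp: P_def intro!: disk)
  finally have "double_circle_integral A B r1 r2 = double_circle_integral A B r1' P" .
  moreover have "double_circle_integral A B r1' P - double_circle_integral A B r1' r2' =
      2 * of_real pi * \<i> * contour_integral (circlepath 0 r1') (\<lambda>z. A z * B z)"
    using assms by (intro double_circle_integral_jump[OF hol]) (auto simp: P_def intro!: disk outside)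
  ultimately show ?thesis by (simp add: algebra_simps)
qed

lemma double_circle_integral_linear_combination:
  assumes "open S" "A0 holomorphic_on S" "A1 holomorphic_on S" "continuous_on (sphere 0 r2) B"
    and "0 < r1" "0 < r2" "r1 \<noteq> r2" "sphere 0 r1 \<subseteq> S"
    and combination: "\<And>z. norm z = r1 \<Longrightarrow> A0 z - c * A1 z = A z"
  shows "double_circle_integral A0 B r1 r2 - c * double_circle_integral A1 B r1 r2 =
           double_circle_integral A B r1 r2"
proof -
  have "(\<lambda>z. A' z * cauchy_circle_integral B r2 z) contour_integrable_on circlepath 0 r1"
    if "A' \<in> {A0, A1}" for A'
    using that assms by (auto intro!: contour_integrable_double_circle_integrand[OF assms(1)])
  then have "double_circle_integral A0 B r1 r2 - c * double_circle_integral A1 B r1 r2 =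
      contour_integral (circlepath 0 r1)
        (\<lambda>z. A0 z * cauchy_circle_integral B r2 z - c * (A1 z * cauchy_circle_integral B r2 z))"
    unfolding double_circle_integral_def
    by (simp add: contour_integral_diff contour_integrable_lmul contour_integral_lmul)
  also have "\<dots> = double_circle_integral A B r1 r2"
    unfolding double_circle_integral_def using assms(5)
    by (intro contour_integral_eq)
      (auto simp: path_image_circlepath_nonneg combination[symmetric] algebra_simps)
  finally show ?thesis .
qed

section \<open>Half-integers\<close>

lemma halfint_iff: "m \<in> halfint \<longleftrightarrow> (\<exists>k::int. m = of_int k + 1/2)"
proof
  assume "m \<in> halfint"
  then obtain k where "m - 1/2 = of_int k" by (auto simp: halfint_def elim: Ints_cases)
  then show "\<exists>k::int. m = of_int k + 1/2" by (intro exI[of _ k]) simp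
qed (auto simp: halfint_def)

lemma halfint_trichotomy:
  assumes "m \<in> halfint"
  shows "m < real_of_int t \<or> m = real_of_int t + 1/2 \<or> real_of_int t + 1 < m"
proof -
  obtain k :: int where m: "m = of_int k + 1/2" using assms halfint_iff by blast
  consider "k + 1 \<le> t" | "k = t" | "t + 1 \<le> k" by linarith
  then show ?thesis
  proof cases
    case 1
    then have "real_of_int k + 1 \<le> real_of_int t" by linarith
    then show ?thesis using m by simp
  next
    case 3
    then have "real_of_int t + 1 \<le> real_of_int k" by linarith
    then show ?thesis using m by simp
  qed (use m in simp)
qed

lemma of_int_less_of_int_plus_half_iff: "real_of_int s < real_of_int t + 1/2 \<longleftrightarrow> s \<le> t"
proof
  assume "real_of_int s < real_of_int t + 1/2"
  then have "real_of_int s < real_of_int (t + 1)" by simp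
  then show "s \<le> t" by linarith
qed simp

lemma finite_halfint_bounded: "finite {m \<in> halfint. a < m \<and> m < b}"
proof (rule finite_subset)
  show "{m \<in> halfint. a < m \<and> m < b} \<subseteq> (\<lambda>k. real_of_int k + 1/2) ` {\<lfloor>a\<rfloor>..\<lceil>b\<rceil>}"
  proof
    fix m assume "m \<in> {m \<in> halfint. a < m \<and> m < b}"
    then obtain k :: int where "m = of_int k + 1/2" "a < of_int k + 1/2" "of_int k + 1/2 < b"
      using halfint_iff by auto
    then have "\<lfloor>a\<rfloor> \<le> k" "k \<le> \<lceil>b\<rceil>" by linarith+
    then show "m \<in> (\<lambda>k. real_of_int k + 1/2) ` {\<lfloor>a\<rfloor>..\<lceil>b\<rceil>}" using \<open>m = _\<close> by auto
  qed
qed auto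

lemma halfint_floor_sum_eq_iff:
  assumes "j \<in> halfint" "j' \<in> halfint"
  shows "\<lfloor>- j - 1/2\<rfloor> + \<lfloor>j' - 1/2\<rfloor> = -1 \<longleftrightarrow> j = j'"
proof -
  obtain k k' :: int where k: "j = of_int k + 1/2" "j' = of_int k' + 1/2" using assms halfint_iff by blast
  then have "- j - 1/2 = of_int (- k - 1)" "j' - 1/2 = of_int k'" by simp_all
  then have "\<lfloor>- j - 1/2\<rfloor> = - k - 1" "\<lfloor>j' - 1/2\<rfloor> = k'" by simp_all
  then show ?thesis using k by auto
qed

lemma halfint_if_Dplus: "m \<in> Dplus N u v \<Longrightarrow> m \<in> halfint"
  by (simp add: Dplus_def)

lemma halfint_if_Dminus: "m \<in> Dminus N u v \<Longrightarrow> m \<in> halfint"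
  by (simp add: Dminus_def)

section \<open>The correlation kernel\<close>

locale skew_profile =
  fixes N :: nat and u v :: "nat \<Rightarrow> int" and q :: "int \<Rightarrow> real"
  assumes interlacing: "\<forall>i\<in>{1..N}. u (i - 1) < v i \<and> v i < u i"
    and q_bounds: "\<forall>s. u 0 < s \<and> s < u N \<longrightarrow> 0 < q s \<and> q s < 1"
begin

lemma u_mono: "i \<le> i' \<Longrightarrow> i' \<le> N \<Longrightarrow> u i \<le> u i'"
proof (induction i' rule: dec_induct)
  case (step n)
  then have "Suc n \<in> {1..N}" by simp
  then have "u n < u (Suc n)" using interlacing by fastforce
  then show ?case using step by simp
qed simp

lemma Dplus_Dminus_disjoint: "Dplus N u v \<inter> Dminus N u v = {}"
proof (intro equals0I)
  fix m assume "m \<in> Dplus N u v \<inter> Dminus N u v"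
  then obtain i i' where i: "i \<in> {1..N}" "real_of_int (v i) < m" "m < real_of_int (u i)"
    and i': "i' \<in> {1..N}" "real_of_int (u (i' - 1)) < m" "m < real_of_int (v i')"
    unfolding Dplus_def Dminus_def by blast
  consider "i < i'" | "i = i'" | "i' < i" by linarith
  then show False
  proof cases
    case 1
    then have "u i \<le> u (i' - 1)" using i' by (intro u_mono) auto
    then show False using i i' by linarith
  next
    case 3
    then have "u i' \<le> u (i - 1)" using i by (intro u_mono) auto
    moreover have "v i' < u i'" "u (i - 1) < v i" using interlacing i i' by auto
    ultimately show False using i i' by linarith
  qed (use i i' in auto)
qed

lemma finite_Dplus: "finite (Dplus N u v)"
  by (rule finite_subset[OF _ finite_halfint_bounded]) (auto simp: Dplus_def)

lemma finite_Dminus: "finite (Dminus N u v)"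
  by (rule finite_subset[OF _ finite_halfint_bounded]) (auto simp: Dminus_def)

lemma finite_xplus_index_set: "finite {s::int. u 0 < s \<and> real_of_int s < m}"
  by (rule finite_subset[of _ "{u 0..\<lceil>m\<rceil>}"]) (auto simp: le_ceiling_iff)

lemma xplus_pos: "m \<le> real_of_int (u N) \<Longrightarrow> 0 < xplus u q m"
  unfolding xplus_def using q_bounds by (intro prod_pos) force

lemma xplus_antimono:
  assumes "m \<le> m'" "m' \<le> real_of_int (u N)"
  shows "xplus u q m' \<le> xplus u q m"
proof -
  define A where "A = {s::int. u 0 < s \<and> real_of_int s < m'}"
  define B where "B = {s::int. u 0 < s \<and> real_of_int s < m}"
  have "B \<subseteq> A" using assms by (auto simp: A_def B_def)
  then have "xplus u q m' = prod q (A - B) * xplus u q m"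
    unfolding xplus_def A_def[symmetric] B_def[symmetric]
    using finite_xplus_index_set by (intro prod.subset_diff) (auto simp: A_def)
  also have "\<dots> \<le> xplus u q m"
    using q_bounds assms xplus_pos[of m]
    by (intro mult_left_le_one_le prod_nonneg prod_le_1) (force simp: A_def)+
  finally show ?thesis .
qed

lemma xplus_step:
  assumes "u 0 < t" "t < u N"
  shows "xplus u q (real_of_int t + 1/2) = q t * xplus u q (real_of_int t)"
proof -
  have "{s. u 0 < s \<and> real_of_int s < real_of_int t + 1/2} =
      insert t {s. u 0 < s \<and> real_of_int s < real_of_int t}"
    using assms by (auto simp: of_int_less_of_int_plus_half_iff)
  then show ?thesis unfolding xplus_def by (simp add: finite_xplus_index_set)
qed

lemma inverse_xplus_Dplus_lower_bound:
  assumes "m \<in> Dplus N u v" "real_of_int t < m"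
  shows "1 / xplus u q (real_of_int t + 1/2) \<le> 1 / xplus u q m"
proof -
  have "m \<in> halfint" "m < real_of_int (u N)" using assms by (auto simp: Dplus_def)
  then have "real_of_int t + 1/2 \<le> m"
    using halfint_trichotomy[of m t] assms by auto
  then show ?thesis using \<open>m < _\<close>
    by (intro divide_left_mono xplus_antimono mult_pos_pos xplus_pos) auto
qed

lemma xminus_Dminus_upper_bound:
  assumes "m \<in> Dminus N u v" "m < real_of_int t" "t \<le> u N"
  shows "xminus u q m \<le> 1 / xplus u q (real_of_int t)"
proof -
  have "m \<in> halfint" using assms by (auto simp: Dminus_def)
  then have "m \<le> real_of_int t" using assms by auto
  then show ?thesis using assms unfolding xminus_def inverse_eq_divide
    by (intro divide_left_mono xplus_antimono mult_pos_pos xplus_pos) auto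
qed

lemma admissible_radii_exist:
  assumes "u 0 < t1" "t1 < u N" "t2 < u N"
  shows "\<exists>r1 r2. admissible_radii N u v q t1 t2 r1 r2"
proof -
  \<comment> \<open>The poles 1/x+_m of 1/Phi_+(.,t1) lie beyond b1 and the zeros x-_m of Phi_-(.,t2) below a2;
    the gap a1 < b1 exists because q t1 < 1.\<close>
  define a1 where "a1 = 1 / xplus u q (real_of_int t1)"
  define b1 where "b1 = 1 / xplus u q (real_of_int t1 + 1/2)"
  define a2 where "a2 = 1 / xplus u q (real_of_int t2)"
  have pos: "0 < xplus u q (real_of_int t1)" "0 < xplus u q (real_of_int t2)"
    "0 < xplus u q (real_of_int t1 + 1/2)"
    using assms by (auto intro!: xplus_pos)
  have "xplus u q (real_of_int t1 + 1/2) < xplus u q (real_of_int t1)"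
    using xplus_step[OF assms(1,2)] q_bounds assms pos by simp
  then have "a1 < b1" unfolding a1_def b1_def using pos by (simp add: divide_strict_left_mono)
  have "0 < a1" "0 < a2" using pos by (auto simp: a1_def a2_def)
  have "\<forall>m\<in>Dplus N u v. real_of_int t1 < m \<longrightarrow> b1 \<le> 1 / xplus u q m"
    unfolding b1_def using inverse_xplus_Dplus_lower_bound by blast
  then have bound1: "\<forall>m\<in>Dplus N u v. real_of_int t1 < m \<longrightarrow> r1 < 1 / xplus u q m" if "r1 < b1" for r1
    using that by force
  have "\<forall>m\<in>Dminus N u v. m < real_of_int t2 \<longrightarrow> xminus u q m \<le> a2"
    unfolding a2_def using xminus_Dminus_upper_bound assms by force
  then have bound2: "\<forall>m\<in>Dminus N u v. m < real_of_int t2 \<longrightarrow> xminus u q m < r2" if "a2 < r2" for r2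
    using that by force
  show ?thesis
  proof (cases "t2 \<le> t1")
    case True
    then have "a2 \<le> a1"
      unfolding a1_def a2_def using pos assms by (intro divide_left_mono xplus_antimono) auto
    then have "admissible_radii N u v q t1 t2 ((a1 + 2*b1)/3) ((2*a1 + b1)/3)"
      unfolding admissible_radii_def using True \<open>a1 < b1\<close> \<open>0 < a1\<close>
      by (intro conjI impI bound1 bound2) auto
    then show ?thesis by blast
  next
    case False
    then have "admissible_radii N u v q t1 t2 (b1/2) (a2 + b1)"
      unfolding admissible_radii_def using \<open>a1 < b1\<close> \<open>0 < a1\<close> \<open>0 < a2\<close>
      by (intro conjI impI bound1 bound2) auto
    then show ?thesis by blast
  qed
qed

definition zdomain :: "int \<Rightarrow> complex set" where
  "zdomain t = {z. z \<noteq> 0 \<and> PhiPlus N u v q z t \<noteq> 0}"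

definition wdomain :: "int \<Rightarrow> complex set" where
  "wdomain t = {w. w \<noteq> 0 \<and> PhiMinus N u v q w t \<noteq> 0}"

definition zfactor :: "int \<Rightarrow> int \<Rightarrow> complex \<Rightarrow> complex" where
  "zfactor t a z = PhiMinus N u v q z t / PhiPlus N u v q z t * z powi a"

definition wfactor :: "int \<Rightarrow> int \<Rightarrow> complex \<Rightarrow> complex" where
  "wfactor t b w = PhiPlus N u v q w t / PhiMinus N u v q w t * w powi b"

lemma PhiPlus_holomorphic: "(\<lambda>z. PhiPlus N u v q z t) holomorphic_on S"
  unfolding PhiPlus_def by (auto intro!: holomorphic_intros)

lemma PhiMinus_holomorphic: "(\<lambda>z. PhiMinus N u v q z t) holomorphic_on - {0}"
  unfolding PhiMinus_def by (auto intro!: holomorphic_intros)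

lemma open_zdomain: "open (zdomain t)"
proof -
  have "zdomain t = - {0} \<inter> (\<lambda>z. PhiPlus N u v q z t) -` (- {0})" by (auto simp: zdomain_def)
  then show ?thesis
    by (metis continuous_open_preimage PhiPlus_holomorphic holomorphic_on_imp_continuous_on
        open_Compl closed_singleton)
qed

lemma open_wdomain: "open (wdomain t)"
proof -
  have "wdomain t = - {0} \<inter> (\<lambda>z. PhiMinus N u v q z t) -` (- {0})" by (auto simp: wdomain_def)
  then show ?thesis
    by (metis continuous_open_preimage PhiMinus_holomorphic holomorphic_on_imp_continuous_on
        open_Compl closed_singleton)
qed

lemma zfactor_holomorphic: "zfactor t a holomorphic_on zdomain t"
  unfolding zfactor_def
  by (auto intro!: holomorphic_intros PhiPlus_holomorphic holomorphic_on_subset[OF PhiMinus_holomorphic]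
      simp: zdomain_def)

lemma wfactor_holomorphic: "wfactor t b holomorphic_on wdomain t"
  unfolding wfactor_def
  by (auto intro!: holomorphic_intros PhiPlus_holomorphic holomorphic_on_subset[OF PhiMinus_holomorphic]
      simp: wdomain_def)

lemma zfactor_mult_wfactor:
  assumes "z \<in> zdomain t" "z \<in> wdomain t"
  shows "zfactor t a z * wfactor t b z = z powi (a + b)"
  using assms by (simp add: zdomain_def wdomain_def zfactor_def wfactor_def power_int_add)

lemma admissible_radii_zdomain:
  assumes "admissible_radii N u v q t1 t2 r1 r2" "t1 \<le> t" "0 < norm z" "norm z \<le> r1"
  shows "z \<in> zdomain t"
proof -
  have "1 - z * complex_of_real (xplus u q m) \<noteq> 0" if "m \<in> Dplus N u v" "real_of_int t < m" for m
  proof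
    have "0 < xplus u q m" using that by (intro xplus_pos) (auto simp: Dplus_def)
    assume "1 - z * complex_of_real (xplus u q m) = 0"
    then have "z * complex_of_real (xplus u q m) = 1" by (metis right_minus_eq)
    then have "norm z * xplus u q m = 1"
      using \<open>0 < xplus u q m\<close> by (metis norm_mult norm_of_real abs_of_pos norm_one)
    then have "norm z = 1 / xplus u q m" using \<open>0 < xplus u q m\<close> by (simp add: field_simps)
    moreover have "norm z < 1 / xplus u q m"
      using assms that unfolding admissible_radii_def by force
    ultimately show False by simp
  qed
  then show ?thesis using assms(3) finite_Dplus by (auto simp: zdomain_def PhiPlus_def prod_zero_iff)
qed

lemma admissible_radii_wdomain:
  assumes "admissible_radii N u v q t1 t2 r1 r2" "t \<le> t2" "r2 \<le> norm w"
  shows "w \<in> wdomain t"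
proof -
  have "w \<noteq> 0" using assms unfolding admissible_radii_def by auto
  moreover have "1 - complex_of_real (xminus u q m) / w \<noteq> 0" if "m \<in> Dminus N u v" "m < real_of_int t" for m
  proof
    have "0 < xminus u q m" using that by (auto simp: xminus_def Dminus_def intro!: xplus_pos)
    assume "1 - complex_of_real (xminus u q m) / w = 0"
    then have "norm w = \<bar>xminus u q m\<bar>" using \<open>w \<noteq> 0\<close> by (simp add: field_simps)
    moreover have "xminus u q m < r2" using assms that unfolding admissible_radii_def by force
    ultimately show False using assms \<open>0 < xminus u q m\<close> by linarith
  qed
  ultimately show ?thesis using finite_Dminus by (auto simp: wdomain_def PhiMinus_def prod_zero_iff)
qed

lemma Kint_eq_double_circle_integral:
  "Kint N u v q r1 r2 t1 j1 t2 j2 =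
     - double_circle_integral (zfactor t1 \<lfloor>- j1 - 1/2\<rfloor>) (wfactor t2 \<lfloor>j2 - 1/2\<rfloor>) r1 r2 / (2 * pi * \<i>)^2"
proof -
  have integrand:
    "(PhiMinus N u v q z t1 * PhiPlus N u v q w t2) / (PhiPlus N u v q z t1 * PhiMinus N u v q w t2) *
       (z powi a * w powi b) / (z - w) = - (zfactor t1 a z * (wfactor t2 b w / (w - z)))" for z w a b
  proof -
    have "z - w = - (w - z)" by simp
    then show ?thesis unfolding zfactor_def wfactor_def
      by (simp only: divide_inverse inverse_mult_distrib inverse_minus_eq) (simp add: mult_ac)
  qed
  show ?thesis
    unfolding Kint_def integrand contour_integral_neg contour_integral_lmul_unconditional
      double_circle_integral_def cauchy_circle_integral_def
    by simp
qed

lemma Kint_radii_independent: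
  assumes r: "admissible_radii N u v q t1 t2 r1 r2" and r': "admissible_radii N u v q t1 t2 r1' r2'"
  shows "Kint N u v q r1 r2 t1 j1 t2 j2 = Kint N u v q r1' r2' t1 j1 t2 j2"
proof -
  have "z \<in> zdomain t1" if "0 < norm z" "norm z \<le> max r1 r1'" for z
    using that admissible_radii_zdomain[OF r, of t1 z] admissible_radii_zdomain[OF r', of t1 z]
    by (auto simp: max_def split: if_splits)
  moreover have "w \<in> wdomain t2" if "min r2 r2' \<le> norm w" for w
    using that admissible_radii_wdomain[OF r, of t2 w] admissible_radii_wdomain[OF r', of t2 w]
    by (auto simp: min_def split: if_splits)
  moreover have "(r1 < r2 \<and> r1' < r2') \<or> (r2 < r1 \<and> r2' < r1')"
    using r r' unfolding admissible_radii_def by (cases "t2 \<le> t1") auto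
  moreover have "0 < r1" "0 < r1'" "0 < r2" "0 < r2'" using r r' by (auto simp: admissible_radii_def)
  ultimately have "double_circle_integral (zfactor t1 a) (wfactor t2 b) r1 r2 =
      double_circle_integral (zfactor t1 a) (wfactor t2 b) r1' r2'" for a b
    by (intro double_circle_integral_radii_eq
        [OF open_zdomain zfactor_holomorphic open_wdomain wfactor_holomorphic])
  then show ?thesis unfolding Kint_eq_double_circle_integral by simp
qed

lemma K_eq_Kint:
  assumes "u 0 < t1" "t1 < u N" "t2 < u N" "admissible_radii N u v q t1 t2 r1 r2"
  shows "K N u v q t1 j1 t2 j2 = Kint N u v q r1 r2 t1 j1 t2 j2"
proof -
  define \<rho> where "\<rho> = (SOME \<rho>. admissible_radii N u v q t1 t2 (fst \<rho>) (snd \<rho>))"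
  obtain r1' r2' where "admissible_radii N u v q t1 t2 r1' r2'"
    using admissible_radii_exist[OF assms(1-3)] by blast
  then have "\<exists>\<rho>. admissible_radii N u v q t1 t2 (fst \<rho>) (snd \<rho>)"
    by (intro exI[of _ "(r1', r2')"]) simp
  then have "admissible_radii N u v q t1 t2 (fst \<rho>) (snd \<rho>)"
    unfolding \<rho>_def by (rule someI_ex)
  then show ?thesis
    unfolding K_def Let_def \<rho>_def[symmetric] using assms(4) by (rule Kint_radii_independent)
qed

lemma admissible_radii_succ:
  "admissible_radii N u v q t t' r1 r2 \<Longrightarrow> t + 1 \<noteq> t' \<Longrightarrow> admissible_radii N u v q (t + 1) t' r1 r2"
  unfolding admissible_radii_def by auto

lemma PhiPlus_PhiMinus_step_Dplus:
  assumes m: "real_of_int t + 1/2 \<in> Dplus N u v"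
  shows "PhiPlus N u v q z t =
      (1 - z * complex_of_real (xplus u q (real_of_int t + 1/2))) * PhiPlus N u v q z (t + 1)"
    and "PhiMinus N u v q z t = PhiMinus N u v q z (t + 1)"
proof -
  have "{m \<in> Dplus N u v. real_of_int t < m} =
      insert (real_of_int t + 1/2) {m \<in> Dplus N u v. real_of_int (t + 1) < m}"
  proof (intro equalityI subsetI)
    fix x assume "x \<in> {m \<in> Dplus N u v. real_of_int t < m}"
    then show "x \<in> insert (real_of_int t + 1/2) {m \<in> Dplus N u v. real_of_int (t + 1) < m}"
      using halfint_trichotomy[of x t, OF halfint_if_Dplus] by auto
  qed (use m in auto)
  then show "PhiPlus N u v q z t =
      (1 - z * complex_of_real (xplus u q (real_of_int t + 1/2))) * PhiPlus N u v q z (t + 1)"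
    unfolding PhiPlus_def using finite_Dplus by (simp add: prod.insert)
  have "{m \<in> Dminus N u v. m < real_of_int t} = {m \<in> Dminus N u v. m < real_of_int (t + 1)}"
  proof (intro equalityI subsetI)
    fix x assume "x \<in> {m \<in> Dminus N u v. m < real_of_int (t + 1)}"
    moreover have "x \<noteq> real_of_int t + 1/2" using calculation m Dplus_Dminus_disjoint by auto
    ultimately show "x \<in> {m \<in> Dminus N u v. m < real_of_int t}"
      using halfint_trichotomy[of x t, OF halfint_if_Dminus] by auto
  qed auto
  then show "PhiMinus N u v q z t = PhiMinus N u v q z (t + 1)"
    unfolding PhiMinus_def by simp
qed

lemma PhiPlus_PhiMinus_step_Dminus:
  assumes m: "real_of_int t + 1/2 \<in> Dminus N u v"
  shows "PhiMinus N u v q z (t + 1) =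
      (1 - complex_of_real (xminus u q (real_of_int t + 1/2)) / z) * PhiMinus N u v q z t"
    and "PhiPlus N u v q z (t + 1) = PhiPlus N u v q z t"
proof -
  have "{m \<in> Dminus N u v. m < real_of_int (t + 1)} =
      insert (real_of_int t + 1/2) {m \<in> Dminus N u v. m < real_of_int t}"
  proof (intro equalityI subsetI)
    fix x assume "x \<in> {m \<in> Dminus N u v. m < real_of_int (t + 1)}"
    then show "x \<in> insert (real_of_int t + 1/2) {m \<in> Dminus N u v. m < real_of_int t}"
      using halfint_trichotomy[of x t, OF halfint_if_Dminus] by auto
  qed (use m in auto)
  then show "PhiMinus N u v q z (t + 1) =
      (1 - complex_of_real (xminus u q (real_of_int t + 1/2)) / z) * PhiMinus N u v q z t"
    unfolding PhiMinus_def using finite_Dminus by (simp add: prod.insert)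
  have "{m \<in> Dplus N u v. real_of_int (t + 1) < m} = {m \<in> Dplus N u v. real_of_int t < m}"
  proof (intro equalityI subsetI)
    fix x assume "x \<in> {m \<in> Dplus N u v. real_of_int t < m}"
    moreover have "x \<noteq> real_of_int t + 1/2" using calculation m Dplus_Dminus_disjoint by auto
    ultimately show "x \<in> {m \<in> Dplus N u v. real_of_int (t + 1) < m}"
      using halfint_trichotomy[of x t, OF halfint_if_Dplus] by auto
  qed auto
  then show "PhiPlus N u v q z (t + 1) = PhiPlus N u v q z t"
    unfolding PhiPlus_def by simp
qed

lemma zfactor_step_Dplus:
  assumes m: "real_of_int t + 1/2 \<in> Dplus N u v" and z: "z \<in> zdomain t"
  shows "zfactor t a z - complex_of_real (xplus u q (real_of_int t + 1/2)) * zfactor t (a + 1) z =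
           zfactor (t + 1) a z"
proof -
  define x where "x = complex_of_real (xplus u q (real_of_int t + 1/2))"
  define Q where "Q = PhiMinus N u v q z (t + 1) / ((1 - z * x) * PhiPlus N u v q z (t + 1))"
  have "z \<noteq> 0" "1 - z * x \<noteq> 0" "PhiPlus N u v q z (t + 1) \<noteq> 0"
    using z PhiPlus_PhiMinus_step_Dplus(1)[OF m] by (auto simp: zdomain_def x_def)
  have "PhiMinus N u v q z t / PhiPlus N u v q z t = Q"
    unfolding PhiPlus_PhiMinus_step_Dplus[OF m] x_def[symmetric] Q_def ..
  moreover have "z powi (a + 1) = z powi a * z" using \<open>z \<noteq> 0\<close> power_int_add_1[of z a] by simp
  ultimately have "zfactor t a z - x * zfactor t (a + 1) z = (1 - z * x) * Q * z powi a"
    unfolding zfactor_def by (simp add: algebra_simps)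
  also have "\<dots> = zfactor (t + 1) a z"
    using \<open>1 - z * x \<noteq> 0\<close> by (simp add: Q_def zfactor_def)
  finally show ?thesis unfolding x_def .
qed

lemma zfactor_step_Dminus:
  assumes m: "real_of_int t + 1/2 \<in> Dminus N u v" and z: "z \<in> zdomain t"
  shows "zfactor t a z - complex_of_real (xminus u q (real_of_int t + 1/2)) * zfactor t (a - 1) z =
           zfactor (t + 1) a z"
proof -
  have "z \<noteq> 0" "PhiPlus N u v q z t \<noteq> 0" using z by (auto simp: zdomain_def)
  moreover have "z powi a = z powi (a - 1) * z" using \<open>z \<noteq> 0\<close> power_int_add_1[of z "a - 1"] by simp
  ultimately show ?thesis
    unfolding zfactor_def PhiPlus_PhiMinus_step_Dminus[OF m]
    by (simp add: field_simps)
qed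

lemma Kint_step:
  fixes d :: int
  assumes s: "admissible_radii N u v q t t' s1 s2"
    and step: "\<And>z a. z \<in> zdomain t \<Longrightarrow> zfactor t a z - c * zfactor t (a + d) z = zfactor (t + 1) a z"
  shows "Kint N u v q s1 s2 t j t' j' - c * Kint N u v q s1 s2 t (j - of_int d) t' j' =
           Kint N u v q s1 s2 (t + 1) j t' j'"
proof -
  define a b where "a = \<lfloor>- j - 1/2\<rfloor>" and "b = \<lfloor>j' - 1/2\<rfloor>"
  have "0 < s1" "0 < s2" "s1 \<noteq> s2" using s unfolding admissible_radii_def by auto
  have "\<lfloor>- (j - of_int d) - 1/2\<rfloor> = a + d"
    unfolding a_def using floor_add_int[of "- j - 1/2" d] by (simp add: algebra_simps)
  moreover have "sphere 0 s1 \<subseteq> zdomain t"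
    using admissible_radii_zdomain[OF s, of t] \<open>0 < s1\<close> by auto
  moreover have "continuous_on (sphere 0 s2) (wfactor t' b)"
    using admissible_radii_wdomain[OF s, of t']
    by (intro holomorphic_on_imp_continuous_on holomorphic_on_subset[OF wfactor_holomorphic]) auto
  ultimately have combination: "double_circle_integral (zfactor t a) (wfactor t' b) s1 s2
      - c * double_circle_integral (zfactor t (a + d)) (wfactor t' b) s1 s2
      = double_circle_integral (zfactor (t + 1) a) (wfactor t' b) s1 s2"
    using \<open>0 < s1\<close> \<open>0 < s2\<close> \<open>s1 \<noteq> s2\<close>
    by (intro double_circle_integral_linear_combination
        [OF open_zdomain zfactor_holomorphic zfactor_holomorphic] step) auto
  then show ?thesis
    unfolding Kint_eq_double_circle_integral a_def[symmetric] b_def[symmetric]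
      \<open>\<lfloor>- (j - of_int d) - 1/2\<rfloor> = a + d\<close> combination[symmetric]
    by (simp add: diff_divide_distrib)
qed

lemma Kint_jump:
  assumes s: "admissible_radii N u v q t (t + 1) s1 s2"
    and r: "admissible_radii N u v q (t + 1) (t + 1) r1 r2"
    and "j \<in> halfint" "j' \<in> halfint"
  shows "Kint N u v q r1 r2 (t + 1) j (t + 1) j' - Kint N u v q s1 s2 (t + 1) j (t + 1) j' =
           (if j = j' then 1 else 0)"
proof -
  define A B where "A = zfactor (t + 1) \<lfloor>- j - 1/2\<rfloor>" and "B = wfactor (t + 1) \<lfloor>j' - 1/2\<rfloor>"
  have radii: "0 < s1" "s1 < s2" "0 < r2" "r2 < r1" using s r unfolding admissible_radii_def by auto
  have disk: "z \<in> zdomain (t + 1)" if "0 < norm z" "norm z \<le> max s1 r1" for z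
    using that admissible_radii_zdomain[OF s, of "t + 1" z] admissible_radii_zdomain[OF r, of "t + 1" z]
    by (auto simp: max_def split: if_splits)
  have outside: "w \<in> wdomain (t + 1)" if "min s2 r2 \<le> norm w" for w
    using that admissible_radii_wdomain[OF s, of "t + 1" w] admissible_radii_wdomain[OF r, of "t + 1" w]
    by (auto simp: min_def split: if_splits)
  have "contour_integral (circlepath 0 r1) (\<lambda>z. A z * B z) =
      contour_integral (circlepath 0 r1) (\<lambda>z. z powi (\<lfloor>- j - 1/2\<rfloor> + \<lfloor>j' - 1/2\<rfloor>))"
    unfolding A_def B_def using radii
    by (intro contour_integral_eq zfactor_mult_wfactor disk outside) (auto simp: path_image_circlepath_nonneg)
  also have "\<dots> = (if j = j' then 2 * of_real pi * \<i> else 0)"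
    using radii contour_integral_circlepath_power_int halfint_floor_sum_eq_iff[OF assms(3,4)] by auto
  finally have residue:
    "contour_integral (circlepath 0 r1) (\<lambda>z. A z * B z) = (if j = j' then 2 * of_real pi * \<i> else 0)" .
  have jump: "double_circle_integral A B r1 r2 - double_circle_integral A B s1 s2 =
      - (2 * of_real pi * \<i> * contour_integral (circlepath 0 r1) (\<lambda>z. A z * B z))"
    unfolding A_def B_def using radii
    by (intro double_circle_integral_radii_jump
        [OF open_zdomain zfactor_holomorphic open_wdomain wfactor_holomorphic] disk outside) auto
  have "Kint N u v q r1 r2 (t + 1) j (t + 1) j' - Kint N u v q s1 s2 (t + 1) j (t + 1) j' =
      - (double_circle_integral A B r1 r2 - double_circle_integral A B s1 s2) / (2 * pi * \<i>)^2"
    unfolding Kint_eq_double_circle_integral A_def B_def by (simp add: diff_divide_distrib)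
  also have "\<dots> = (if j = j' then 1 else 0)"
    unfolding jump residue by (simp add: power2_eq_square)
  finally show ?thesis .
qed

lemma K_difference_equation:
  fixes d :: int
  assumes "u 0 < t" "t + 1 < u N" "t' < u N" "j \<in> halfint" "j' \<in> halfint"
    and step: "\<And>z a. z \<in> zdomain t \<Longrightarrow> zfactor t a z - c * zfactor t (a + d) z = zfactor (t + 1) a z"
  shows "K N u v q (t + 1) j t' j' - K N u v q t j t' j' + c * K N u v q t (j - of_int d) t' j' =
           (if t + 1 = t' \<and> j = j' then 1 else 0)"
proof -
  obtain s1 s2 where s: "admissible_radii N u v q t t' s1 s2"
    using admissible_radii_exist assms by fastforce
  have "K N u v q t j t' j' - c * K N u v q t (j - of_int d) t' j' = Kint N u v q s1 s2 (t + 1) j t' j'"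
    using K_eq_Kint[OF _ _ _ s] Kint_step[OF s step] assms by simp
  moreover have "K N u v q (t + 1) j t' j' - Kint N u v q s1 s2 (t + 1) j t' j' =
      (if t + 1 = t' \<and> j = j' then 1 else 0)"
  proof (cases "t + 1 = t'")
    case True
    obtain r1 r2 where r: "admissible_radii N u v q (t + 1) (t + 1) r1 r2"
      using admissible_radii_exist assms by fastforce
    then show ?thesis
      using K_eq_Kint[OF _ _ _ r] Kint_jump[OF s[folded True] r] True assms by simp
  next
    case False
    then show ?thesis
      using K_eq_Kint[OF _ _ _ admissible_radii_succ[OF s False]] assms by simp
  qed
  ultimately show ?thesis by (simp add: algebra_simps)
qed

end

theorem mainTheorem4:
  fixes N :: nat and u v :: "nat \<Rightarrow> int" and q :: "int \<Rightarrow> real"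
    and t t' :: int and j j' :: real
  assumes "N \<ge> 1"
    and "\<forall>i\<in>{1..N}. u (i - 1) < v i \<and> v i < u i"
    and "\<forall>s. u 0 < s \<and> s < u N \<longrightarrow> 0 < q s \<and> q s < 1"
    and "u 0 < t" and "t + 1 < u N"
    and "u 0 < t'" and "t' < u N"
    and "j \<in> halfint" and "j' \<in> halfint"
  shows "(real_of_int t + 1/2 \<in> Dplus N u v \<longrightarrow>
            K N u v q (t + 1) j t' j' - K N u v q t j t' j'
            + complex_of_real (xplus u q (real_of_int t + 1/2)) * K N u v q t (j - 1) t' j'
            = (if t + 1 = t' \<and> j = j' then 1 else 0)) \<and>
         (real_of_int t + 1/2 \<in> Dminus N u v \<longrightarrow>
            K N u v q (t + 1) j t' j' - K N u v q t j t' j'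
            + complex_of_real (xminus u q (real_of_int t + 1/2)) * K N u v q t (j + 1) t' j'
            = (if t + 1 = t' \<and> j = j' then 1 else 0))"
proof -
  interpret skew_profile N u v q using assms(2,3) by unfold_locales
  show ?thesis
  proof (intro conjI impI)
    assume "real_of_int t + 1/2 \<in> Dplus N u v"
    then show "K N u v q (t + 1) j t' j' - K N u v q t j t' j'
        + complex_of_real (xplus u q (real_of_int t + 1/2)) * K N u v q t (j - 1) t' j'
        = (if t + 1 = t' \<and> j = j' then 1 else 0)"
      using K_difference_equation[where d = 1] zfactor_step_Dplus assms by simp
  next
    assume "real_of_int t + 1/2 \<in> Dminus N u v"
    then show "K N u v q (t + 1) j t' j' - K N u v q t j t' j'
        + complex_of_real (xminus u q (real_of_int t + 1/2)) * K N u v q t (j + 1) t' j'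
        = (if t + 1 = t' \<and> j = j' then 1 else 0)"
      using K_difference_equation[where d = "-1"] zfactor_step_Dminus assms by simp
  qed
qed

end
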